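(* For $c>0$ and $\beta\in\mathcal{I}_H$ let $c\odot\beta:=\{(ca,cb)\colon(a,b)\in\beta\}$. For each $c>0$, the map $\beta\mapsto c\odot\beta$ is a bijection on $\mathcal{I}_\alpha$ and on $\mathcal{I}_H$; specifically, if $\beta\in\mathcal{I}_\alpha$ then $c\odot\beta$ has the $\alpha$-diversity property and $\mathscr{D}_{c\odot\beta}(ct)=c^\alpha\mathscr{D}_\beta(t)$ for all $t>0$. Moreover, for $\beta,\gamma\in\mathcal{I}_\alpha$ and $c>0$: $d_H'(\beta,c\odot\beta)=|c-1|\,\|\beta\|$, $d_H'(c\odot\beta,c\odot\gamma)=c\,d_H'(\beta,\gamma)$, $d_\alpha(\beta,c\odot\beta)\le\max\{|c^\alpha-1|\,\mathscr{D}_\beta(\infty),\ |c-1|\,\|\beta\|\}$, and $\min\{c,c^\alpha\}\,d_\alpha(\beta,\gamma)\le d_\alpha(c\odot\beta,c\odot\gamma)\le\max\{c,c^\alpha\}\,d_\alpha(\beta,\gamma)$.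
   Context: Fix $\alpha\in(0,1)$. An interval partition is a set $\beta$ of disjoint open subintervals (blocks) of some interval $[0,L]$ that cover $[0,L]$ up to a Lebesgue-null set; write $\|\beta\|:=L$ and $\mathrm{Leb}(U)$ for the length of a block $U$. $\mathcal{I}_H$ is the set of all interval partitions. $\beta$ has the $\alpha$-diversity property if for every $t\in[0,\|\beta\|]$ the limit $\mathscr{D}_\beta(t):=\Gamma(1-\alpha)\lim_{h\downarrow0}h^\alpha\#\{(a,b)\in\beta\colon b-a>h,\ b\le t\}$ exists; $\mathcal{I}_\alpha$ is the set of such partitions. For $U\in\beta$, $\mathscr{D}_\beta(U):=\mathscr{D}_\beta(t)$ for $t\in U$; $\mathscr{D}_\beta(\infty):=\mathscr{D}_\beta(\|\beta\|)$. A correspondence between $\beta,\gamma$ is a finite sequence $(U_j,V_j)_{j\in[n]}$, $n\ge0$, of pairs in $\beta\times\gamma$ with $(U_j)_j$ and $(V_j)_j$ each strictly increasing in left-to-right order. Its Hausdorff distortion is the maximum of (i) $\sum_{j}|\mathrm{Leb}(U_j)-\mathrm{Leb}(V_j)|+\|\beta\|-\sum_j\mathrm{Leb}(U_j)$ and (ii) $\sum_{j}|\mathrm{Leb}(U_j)-\mathrm{Leb}(V_j)|+\|\gamma\|-\sum_j\mathrm{Leb}(V_j)$; for $\beta,\gamma\in\mathcal{I}_\alpha$ its $\alpha$-distortion is the maximum of (i), (ii), (iii) $\sup_j|\mathscr{D}_\beta(U_j)-\mathscr{D}_\gamma(V_j)|$ and (iv) $|\mathscr{D}_\beta(\infty)-\mathscr{D}_\gamma(\infty)|$.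 $d_H'(\beta,\gamma)$ and $d_\alpha(\beta,\gamma)$ are the infima over all correspondences of the Hausdorff distortion and the $\alpha$-distortion, respectively. *)

theory Defs
  imports "HOL-Analysis.Analysis"
begin

text \<open>An interval partition is represented as a set of pairs (a,b) with a < b,
  each pair standing for the open block {a<..<b}.\<close>

type_synonym ipart = "(real \<times> real) set"

definition Leb :: "real \<times> real \<Rightarrow> real" where
  "Leb U = snd U - fst U"

definition block :: "real \<times> real \<Rightarrow> real set" where
  "block U = {fst U<..<snd U}"

text \<open>The total length; for an interval partition of [0,L] this is L.\<close>
definition IP_len :: "ipart \<Rightarrow> real" where
  "IP_len \<beta> = Sup (insert 0 (snd ` \<beta>))"

definition interval_partition :: "ipart \<Rightarrow> bool" where
  "interval_partition \<beta> \<longleftrightarrow>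
     (\<forall>U\<in>\<beta>. 0 \<le> fst U \<and> fst U < snd U)
   \<and> bdd_above (snd ` \<beta>)
   \<and> (\<forall>U\<in>\<beta>. \<forall>V\<in>\<beta>. U \<noteq> V \<longrightarrow> block U \<inter> block V = {})
   \<and> {0..IP_len \<beta>} - (\<Union>U\<in>\<beta>. block U) \<in> null_sets lebesgue"

definition IH :: "ipart set" where
  "IH = {\<beta>. interval_partition \<beta>}"

definition div_count :: "ipart \<Rightarrow> real \<Rightarrow> real \<Rightarrow> nat" where
  "div_count \<beta> t h = card {U\<in>\<beta>. snd U - fst U > h \<and> snd U \<le> t}"

definition has_diversity :: "real \<Rightarrow> ipart \<Rightarrow> bool" where
  "has_diversity \<alpha> \<beta> \<longleftrightarrow> (\<forall>t\<in>{0..IP_len \<beta>}.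
      \<exists>L. ((\<lambda>h. h powr \<alpha> * real (div_count \<beta> t h)) \<longlongrightarrow> L) (at_right 0))"

definition IA :: "real \<Rightarrow> ipart set" where
  "IA \<alpha> = {\<beta>. interval_partition \<beta> \<and> has_diversity \<alpha> \<beta>}"

definition diversity :: "real \<Rightarrow> ipart \<Rightarrow> real \<Rightarrow> real" where
  "diversity \<alpha> \<beta> t = Gamma (1 - \<alpha>) *
      Lim (at_right 0) (\<lambda>h. h powr \<alpha> * real (div_count \<beta> t h))"

text \<open>D_beta(U) := D_beta(t) for t in U (we take the midpoint).\<close>
definition div_block :: "real \<Rightarrow> ipart \<Rightarrow> real \<times> real \<Rightarrow> real" where
  "div_block \<alpha> \<beta> U = diversity \<alpha> \<beta> ((fst U + snd U) / 2)"

definition div_inf :: "real \<Rightarrow> ipart \<Rightarrow> real" where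
  "div_inf \<alpha> \<beta> = diversity \<alpha> \<beta> (IP_len \<beta>)"

definition correspondence :: "ipart \<Rightarrow> ipart \<Rightarrow> ((real \<times> real) \<times> (real \<times> real)) list \<Rightarrow> bool" where
  "correspondence \<beta> \<gamma> cs \<longleftrightarrow>
     (\<forall>p\<in>set cs. fst p \<in> \<beta> \<and> snd p \<in> \<gamma>)
   \<and> sorted_wrt (\<lambda>U U'. fst U < fst U') (map fst cs)
   \<and> sorted_wrt (\<lambda>V V'. fst V < fst V') (map snd cs)"

definition dis_H :: "ipart \<Rightarrow> ipart \<Rightarrow> ((real \<times> real) \<times> (real \<times> real)) list \<Rightarrow> real" where
  "dis_H \<beta> \<gamma> cs =
     (let S = sum_list (map (\<lambda>p. \<bar>Leb (fst p) - Leb (snd p)\<bar>) cs) in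
      max (S + IP_len \<beta> - sum_list (map (\<lambda>p. Leb (fst p)) cs))
          (S + IP_len \<gamma> - sum_list (map (\<lambda>p. Leb (snd p)) cs)))"

definition dis_alpha :: "real \<Rightarrow> ipart \<Rightarrow> ipart \<Rightarrow> ((real \<times> real) \<times> (real \<times> real)) list \<Rightarrow> real" where
  "dis_alpha \<alpha> \<beta> \<gamma> cs =
     max (dis_H \<beta> \<gamma> cs)
       (max (Max (insert 0 (set (map (\<lambda>p. \<bar>div_block \<alpha> \<beta> (fst p) - div_block \<alpha> \<gamma> (snd p)\<bar>) cs))))
            \<bar>div_inf \<alpha> \<beta> - div_inf \<alpha> \<gamma>\<bar>)"

definition dH' :: "ipart \<Rightarrow> ipart \<Rightarrow> real" where
  "dH' \<beta> \<gamma> = (INF cs\<in>{cs. correspondence \<beta> \<gamma> cs}. dis_H \<beta> \<gamma> cs)"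

definition d_alpha :: "real \<Rightarrow> ipart \<Rightarrow> ipart \<Rightarrow> real" where
  "d_alpha \<alpha> \<beta> \<gamma> = (INF cs\<in>{cs. correspondence \<beta> \<gamma> cs}. dis_alpha \<alpha> \<beta> \<gamma> cs)"

definition scale :: "real \<Rightarrow> ipart \<Rightarrow> ipart" where
  "scale c \<beta> = (\<lambda>(a, b). (c * a, c * b)) ` \<beta>"

end

theory Submission
  imports Defs
begin

text \<open>The
  number of blocks longer than \<open>h\<close> that end before \<open>t\<close> satisfies
  \<open>N\<^sub>c\<^sub>\<beta>(c t, h) = N\<^sub>\<beta>(t, h / c)\<close>, so \<open>h\<^sup>\<alpha> N\<close> picks up the factor \<open>c\<^sup>\<alpha>\<close> and the
  diversity scales by \<open>c\<^sup>\<alpha>\<close>. Dilating a correspondence between \<open>\<beta>\<close> and \<open>\<gamma>\<close> therefore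
  gives one between \<open>c\<beta>\<close> and \<open>c\<gamma>\<close> whose Hausdorff terms are multiplied by \<open>c\<close> and
  whose diversity terms are multiplied by \<open>c\<^sup>\<alpha>\<close>, and this is a bijection of correspondences.
  For \<open>\<beta>\<close> against \<open>c\<beta>\<close>, the difference of total lengths bounds every distortion below
  by \<open>|c - 1| \<parallel>\<beta>\<parallel>\<close>. Conversely, finitely many blocks exhaust the length of \<open>\<beta>\<close>
  up to any \<open>\<epsilon>\<close>, because the uncovered part of \<open>[0, \<parallel>\<beta>\<parallel>]\<close> is null. Matching
  these blocks with their own dilations then attains the bound up to \<open>\<epsilon>\<close>.\<close>

lemma mult_left_Sup_real:
  fixes A :: "real set"
  assumes "0 \<le> c" "A \<noteq> {}" "bdd_above A"
  shows "c * Sup A = Sup ((*) c ` A)"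
  by (rule continuous_at_Sup_mono)
    (use assms in \<open>auto intro!: monoI mult_left_mono continuous_intros\<close>)

lemma mult_left_INF_real:
  fixes f :: "'a \<Rightarrow> real"
  assumes "0 \<le> c" "C \<noteq> {}" "bdd_below (f ` C)"
  shows "c * (INF x\<in>C. f x) = (INF x\<in>C. c * f x)"
  unfolding image_image[symmetric, of "(*) c" f C]
  by (rule continuous_at_Inf_mono)
    (use assms in \<open>auto intro!: monoI mult_left_mono continuous_intros\<close>)

lemma mult_image_eq:
  assumes "c \<noteq> 0"
  shows "(*) c ` S = {x :: real. x / c \<in> S}"
proof (intro set_eqI iffI)
  fix x assume "x \<in> (*) c ` S"
  then show "x \<in> {x. x / c \<in> S}"
    using assms by auto
next
  fix x assume "x \<in> {x. x / c \<in> S}"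
  then have "c * (x / c) \<in> (*) c ` S"
    by blast
  then show "x \<in> (*) c ` S"
    using assms by simp
qed

lemma null_sets_lebesgue_mult_image:
  fixes N :: "real set"
  assumes "N \<in> null_sets lebesgue"
  shows "(*) c ` N \<in> null_sets lebesgue"
  using assms unfolding negligible_iff_null_sets[symmetric]
  by (intro negligible_differentiable_image_negligible) (auto intro: derivative_intros)

lemma abs_diff_mult_self:
  fixes x k :: real
  assumes "0 \<le> x"
  shows "\<bar>x - k * x\<bar> = \<bar>k - 1\<bar> * x"
proof -
  have "x - k * x = (1 - k) * x"
    by (simp add: algebra_simps)
  then show ?thesis
    using assms by (simp add: abs_mult abs_minus_commute)
qed

lemma max_scaled_bounds:
  fixes a b c k :: real
  assumes "0 \<le> a" "0 \<le> b" "0 \<le> c" "0 \<le> k"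
  shows "min c k * max a b \<le> max (c * a) (k * b)" "max (c * a) (k * b) \<le> max c k * max a b"
proof -
  have "min c k * max a b = max (min c k * a) (min c k * b)"
    using assms by (simp add: max_mult_distrib_left)
  also have "\<dots> \<le> max (c * a) (k * b)"
    using assms by (intro max.mono mult_right_mono) simp_all
  finally show "min c k * max a b \<le> max (c * a) (k * b)" .
  have "max (c * a) (k * b) \<le> max (max c k * a) (max c k * b)"
    using assms by (intro max.mono mult_right_mono) simp_all
  also have "\<dots> = max c k * max a b"
    using assms by (simp add: max_mult_distrib_left)
  finally show "max (c * a) (k * b) \<le> max c k * max a b" .
qed

lemma Max_insert_0_mult:
  fixes f :: "'a \<Rightarrow> real"
  assumes "0 \<le> k"
  shows "Max (insert 0 (set (map (\<lambda>x. k * f x) xs))) = k * Max (insert 0 (set (map f xs)))"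
proof -
  have "mono ((*) k)"
    using assms by (auto intro: monoI mult_left_mono)
  then have "k * Max (insert 0 (set (map f xs))) = Max ((*) k ` insert 0 (set (map f xs)))"
    by (rule mono_Max_commute) simp_all
  then show ?thesis
    by (simp add: image_image)
qed

section \<open>Blocks of interval partitions\<close>

definition scale_block :: "real \<Rightarrow> real \<times> real \<Rightarrow> real \<times> real" where
  "scale_block c U = (c * fst U, c * snd U)"

lemma scale_block_simps [simp]:
  "fst (scale_block c U) = c * fst U" "snd (scale_block c U) = c * snd U"
  by (simp_all add: scale_block_def)

lemma Leb_scale_block [simp]: "Leb (scale_block c U) = c * Leb U"
  by (simp add: Leb_def right_diff_distrib)

lemma scale_block_inverse [simp]: "c \<noteq> 0 \<Longrightarrow> scale_block (1 / c) (scale_block c U) = U"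
  by (simp add: scale_block_def)

lemma inj_scale_block: "c \<noteq> 0 \<Longrightarrow> inj (scale_block c)"
  by (metis injI scale_block_inverse)

lemma block_scale_block: "0 < c \<Longrightarrow> x \<in> block (scale_block c U) \<longleftrightarrow> x / c \<in> block U"
  by (simp add: block_def pos_less_divide_eq pos_divide_less_eq mult.commute)

lemma interval_partitionD:
  assumes "interval_partition \<beta>" "U \<in> \<beta>"
  shows "0 \<le> fst U" "fst U < snd U" "snd U \<le> IP_len \<beta>"
proof -
  show "0 \<le> fst U" "fst U < snd U"
    using assms by (auto simp: interval_partition_def)
  have "bdd_above (insert 0 (snd ` \<beta>))"
    using assms(1) by (auto simp: interval_partition_def)
  then show "snd U \<le> IP_len \<beta>"
    unfolding IP_len_def using assms(2) by (simp add: cSup_upper)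
qed

lemma IP_len_nonneg: "interval_partition \<beta> \<Longrightarrow> 0 \<le> IP_len \<beta>"
  unfolding IP_len_def interval_partition_def by (simp add: cSup_upper)

lemma interval_partition_disjoint:
  "interval_partition \<beta> \<Longrightarrow> U \<in> \<beta> \<Longrightarrow> V \<in> \<beta> \<Longrightarrow> U \<noteq> V \<Longrightarrow> block U \<inter> block V = {}"
  by (simp add: interval_partition_def)

lemma Leb_pos: "interval_partition \<beta> \<Longrightarrow> U \<in> \<beta> \<Longrightarrow> 0 < Leb U"
  using interval_partitionD(2)[of \<beta> U] by (simp add: Leb_def)

lemma inj_on_fst_blocks:
  assumes \<beta>: "interval_partition \<beta>"
  shows "inj_on fst \<beta>"
proof (rule inj_onI, rule ccontr)
  fix U V assume UV: "U \<in> \<beta>" "V \<in> \<beta>" "fst U = fst V" "U \<noteq> V"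
  define x where "x = (fst U + min (snd U) (snd V)) / 2"
  have "fst U < snd U" "fst V < snd V"
    using interval_partitionD(2)[OF \<beta>] UV(1,2) by simp_all
  then have "x \<in> block U \<inter> block V"
    using UV(3) by (auto simp: block_def x_def min_def)
  then show False
    using interval_partition_disjoint[OF \<beta> UV(1,2,4)] by blast
qed

lemma measure_block: "fst U \<le> snd U \<Longrightarrow> measure lebesgue (block U) = Leb U"
  by (simp add: block_def Leb_def)

lemma block_subset_IP_len: "interval_partition \<beta> \<Longrightarrow> U \<in> \<beta> \<Longrightarrow> block U \<subseteq> {0..IP_len \<beta>}"
  using interval_partitionD[of \<beta> U] by (auto simp: block_def)

lemma lmeasurable_blocks:
  assumes "interval_partition \<beta>" "\<beta>' \<subseteq> \<beta>"
  shows "(\<Union>U\<in>\<beta>'. block U) \<in> lmeasurable"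
proof (rule lmeasurable_open)
  show "bounded (\<Union>U\<in>\<beta>'. block U)"
    using assms block_subset_IP_len by (blast intro: bounded_subset[OF bounded_closed_interval])
qed (auto simp: block_def)

lemma sum_measure_blocks:
  assumes \<beta>: "interval_partition \<beta>" and "F \<subseteq> \<beta>"
  shows "(\<Sum>U\<in>F. measure lebesgue (block U)) = sum Leb F"
proof (rule sum.cong)
  fix U assume "U \<in> F"
  then have "fst U \<le> snd U"
    using assms(2) interval_partitionD(2)[OF \<beta>] by (meson less_imp_le subsetD)
  then show "measure lebesgue (block U) = Leb U"
    by (rule measure_block)
qed simp

lemma sum_Leb_le_IP_len:
  assumes \<beta>: "interval_partition \<beta>" and F: "finite F" "F \<subseteq> \<beta>"
  shows "sum Leb F \<le> IP_len \<beta>"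
proof -
  have "sum Leb F = (\<Sum>U\<in>F. measure lebesgue (block U))"
    by (rule sum_measure_blocks[OF \<beta> F(2), symmetric])
  also have "\<dots> = measure lebesgue (\<Union>U\<in>F. block U)"
  proof (rule measure_UNION'[symmetric, OF F(1)])
    show "pairwise (\<lambda>U V. disjnt (block U) (block V)) F"
      using F(2) interval_partition_disjoint[OF \<beta>] unfolding pairwise_def disjnt_def by blast
  qed (simp add: block_def)
  also have "\<dots> \<le> measure lebesgue {0..IP_len \<beta>}"
  proof (rule measure_mono_fmeasurable)
    show "(\<Union>U\<in>F. block U) \<subseteq> {0..IP_len \<beta>}"
      using F(2) block_subset_IP_len[OF \<beta>] by blast
    show "(\<Union>U\<in>F. block U) \<in> sets lebesgue"
      using lmeasurable_blocks[OF \<beta> F(2)] by (simp add: fmeasurable_def)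
  qed simp
  also have "\<dots> = IP_len \<beta>"
    using IP_len_nonneg[OF \<beta>] by simp
  finally show ?thesis .
qed

lemma sorted_fst_imp_distinct:
  fixes xs :: "(real \<times> real) list"
  assumes "sorted_wrt (\<lambda>U V. fst U < fst V) xs"
  shows "distinct xs"
proof -
  have "sorted_wrt (<) (map fst xs)"
    using assms by (simp add: sorted_wrt_map)
  then show ?thesis
    by (simp add: strict_sorted_iff distinct_map)
qed

lemma sum_list_Leb_le_IP_len:
  assumes \<beta>: "interval_partition \<beta>" and "set xs \<subseteq> \<beta>" "sorted_wrt (\<lambda>U V. fst U < fst V) xs"
  shows "sum_list (map Leb xs) \<le> IP_len \<beta>"
proof -
  have "sum_list (map Leb xs) = sum Leb (set xs)"
    using sorted_fst_imp_distinct[OF assms(3)] by (rule sum_list_distinct_conv_sum_set)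
  also have "\<dots> \<le> IP_len \<beta>"
    using sum_Leb_le_IP_len[OF \<beta> _ assms(2)] by simp
  finally show ?thesis .
qed

lemma exists_sorted_blocks:
  assumes \<beta>: "interval_partition \<beta>" and "finite F" "F \<subseteq> \<beta>"
  obtains xs where "set xs = F" "sorted_wrt (\<lambda>U V. fst U < fst V) xs"
proof -
  interpret folding_insort_key "(\<le>) :: real \<Rightarrow> real \<Rightarrow> bool" "(<)" \<beta> fst
    using inj_on_fst_blocks[OF \<beta>] by unfold_locales
  obtain xs where "sorted_wrt (<) (map fst xs)" "set xs = F"
    using finite_set_strict_sorted[OF assms(3,2)] by blast
  then show ?thesis
    using that by (simp add: sorted_wrt_map)
qed

lemma finite_long_blocks:
  assumes \<beta>: "interval_partition \<beta>" and "0 < h"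
  shows "finite {U\<in>\<beta>. h < Leb U}"
proof (rule ccontr)
  assume "infinite {U\<in>\<beta>. h < Leb U}"
  then obtain F where F: "finite F" "card F = nat \<lceil>IP_len \<beta> / h\<rceil> + 1" "F \<subseteq> {U\<in>\<beta>. h < Leb U}"
    by (meson infinite_arbitrarily_large)
  have "IP_len \<beta> / h < real (card F)"
    unfolding F(2) by linarith
  then have "IP_len \<beta> < real (card F) * h"
    using \<open>0 < h\<close> by (simp add: pos_divide_less_eq)
  also have "\<dots> \<le> sum Leb F"
    using F(3) sum_bounded_below[of F h Leb] by fastforce
  also have "\<dots> \<le> IP_len \<beta>"
    using sum_Leb_le_IP_len[OF \<beta> F(1)] F(3) by blast
  finally show False by simp
qed

lemma IP_len_le_measure_blocks:
  assumes \<beta>: "interval_partition \<beta>"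
  shows "IP_len \<beta> \<le> measure lebesgue (\<Union>U\<in>\<beta>. block U)"
proof -
  let ?B = "\<Union>U\<in>\<beta>. block U"
  have B: "?B \<in> lmeasurable"
    using lmeasurable_blocks[OF \<beta> order_refl] .
  have N: "{0..IP_len \<beta>} - ?B \<in> null_sets lebesgue"
    using \<beta> by (simp add: interval_partition_def)
  have "IP_len \<beta> = measure lebesgue {0..IP_len \<beta>}"
    using IP_len_nonneg[OF \<beta>] by simp
  also have "\<dots> \<le> measure lebesgue (?B \<union> ({0..IP_len \<beta>} - ?B))"
    using fmeasurable.Un[OF B fmeasurableI_null_sets[OF N]] by (intro measure_mono_fmeasurable) auto
  also have "\<dots> = measure lebesgue ?B"
    using B by (intro measure_Un_null_set[OF _ N]) (rule fmeasurableD)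
  finally show ?thesis .
qed

lemma tendsto_measure_long_blocks:
  assumes \<beta>: "interval_partition \<beta>"
  shows "(\<lambda>n. measure lebesgue (\<Union>U\<in>{U\<in>\<beta>. 1 / Suc n < Leb U}. block U))
           \<longlonglongrightarrow> measure lebesgue (\<Union>U\<in>\<beta>. block U)"
proof -
  define A where "A n = (\<Union>U\<in>{U\<in>\<beta>. 1 / Suc n < Leb U}. block U)" for n :: nat
  have "incseq A"
  proof (rule incseq_SucI)
    fix n
    have "1 / real (Suc (Suc n)) \<le> 1 / Suc n"
      by (simp add: frac_le)
    then have "{U\<in>\<beta>. 1 / Suc n < Leb U} \<subseteq> {U\<in>\<beta>. 1 / Suc (Suc n) < Leb U}"
      by auto
    then show "A n \<subseteq> A (Suc n)"
      unfolding A_def by (rule UN_mono) simp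
  qed
  moreover have UA: "(\<Union>n. A n) = (\<Union>U\<in>\<beta>. block U)"
  proof (intro antisym subsetI)
    fix x assume "x \<in> (\<Union>U\<in>\<beta>. block U)"
    then obtain U where U: "U \<in> \<beta>" "x \<in> block U"
      by blast
    obtain n where "1 / Suc n < Leb U"
      using Leb_pos[OF \<beta> U(1)] by (rule nat_approx_posE)
    then show "x \<in> (\<Union>n. A n)"
      unfolding A_def using U by blast
  next
    fix x assume "x \<in> (\<Union>n. A n)"
    then show "x \<in> (\<Union>U\<in>\<beta>. block U)"
      unfolding A_def by blast
  qed
  moreover have "A n \<in> sets lebesgue" for n
    unfolding A_def by (rule fmeasurableD[OF lmeasurable_blocks[OF \<beta>]]) blast
  then have "range A \<subseteq> sets lebesgue"
    by blast
  moreover have "emeasure lebesgue (\<Union>U\<in>\<beta>. block U) \<noteq> top"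
    using lmeasurable_blocks[OF \<beta> order_refl] by (rule fmeasurableD2)
  ultimately have "(\<lambda>n. measure lebesgue (A n)) \<longlonglongrightarrow> measure lebesgue (\<Union>n. A n)"
    by (intro Lim_measure_incseq) simp_all
  then show ?thesis
    unfolding UA by (simp only: A_def)
qed

lemma exists_finite_blocks_sum_Leb_gt:
  assumes \<beta>: "interval_partition \<beta>" and "0 < \<epsilon>"
  obtains F where "finite F" "F \<subseteq> \<beta>" "IP_len \<beta> - \<epsilon> < sum Leb F"
proof -
  have "\<forall>\<^sub>F n in sequentially. measure lebesgue (\<Union>U\<in>\<beta>. block U) - \<epsilon>
      < measure lebesgue (\<Union>U\<in>{U\<in>\<beta>. 1 / Suc n < Leb U}. block U)"
    using \<open>0 < \<epsilon>\<close> by (intro order_tendstoD(1)[OF tendsto_measure_long_blocks[OF \<beta>]]) simp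
  then obtain n where n: "measure lebesgue (\<Union>U\<in>\<beta>. block U) - \<epsilon>
      < measure lebesgue (\<Union>U\<in>{U\<in>\<beta>. 1 / Suc n < Leb U}. block U)"
    using eventually_happens'[OF sequentially_bot] by blast
  define F where "F = {U\<in>\<beta>. 1 / Suc n < Leb U}"
  have F: "finite F" "F \<subseteq> \<beta>"
    unfolding F_def by (auto intro: finite_long_blocks[OF \<beta>])
  have "IP_len \<beta> - \<epsilon> < measure lebesgue (\<Union>U\<in>F. block U)"
    using n IP_len_le_measure_blocks[OF \<beta>] unfolding F_def by linarith
  also have "\<dots> \<le> (\<Sum>U\<in>F. measure lebesgue (block U))"
    by (rule measure_UNION_le[OF F(1)]) (simp add: block_def)
  also have "\<dots> = sum Leb F"
    by (rule sum_measure_blocks[OF \<beta> F(2)])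
  finally show ?thesis
    using that F by blast
qed

section \<open>Dilation of interval partitions\<close>

lemma scale_eq_image: "scale c \<beta> = scale_block c ` \<beta>"
  by (auto simp: scale_def scale_block_def case_prod_beta)

lemma scale_inverse: "c \<noteq> 0 \<Longrightarrow> scale (1 / c) (scale c \<beta>) = \<beta>"
  by (simp add: scale_eq_image image_image)

lemma bij_betw_scale:
  assumes "0 < c" "\<And>\<beta> c. 0 < c \<Longrightarrow> \<beta> \<in> A \<Longrightarrow> scale c \<beta> \<in> A"
  shows "bij_betw (scale c) A A"
  by (rule bij_betw_byWitness[where f' = "scale (1 / c)"])
    (use assms scale_inverse[of c] scale_inverse[of "1 / c"] in auto)

lemma IP_len_scale:
  assumes "0 < c" "interval_partition \<beta>"
  shows "IP_len (scale c \<beta>) = c * IP_len \<beta>"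
proof -
  have "insert 0 (snd ` scale c \<beta>) = (*) c ` insert 0 (snd ` \<beta>)"
    by (auto simp: scale_eq_image image_image)
  then show ?thesis
    using assms unfolding IP_len_def interval_partition_def
    by (simp add: mult_left_Sup_real)
qed

lemma uncovered_scale:
  assumes c: "0 < c" and \<beta>: "interval_partition \<beta>"
  shows "{0..IP_len (scale c \<beta>)} - (\<Union>U\<in>scale c \<beta>. block U)
           = (*) c ` ({0..IP_len \<beta>} - (\<Union>U\<in>\<beta>. block U))"
proof -
  have I: "x \<in> {0..c * IP_len \<beta>} \<longleftrightarrow> x / c \<in> {0..IP_len \<beta>}" for x
    using c by (simp add: pos_le_divide_eq pos_divide_le_eq mult.commute)
  have B: "x \<in> (\<Union>U\<in>scale c \<beta>. block U) \<longleftrightarrow> x / c \<in> (\<Union>U\<in>\<beta>. block U)" for x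
    using c by (simp add: scale_eq_image block_scale_block)
  show ?thesis
    unfolding IP_len_scale[OF c \<beta>] mult_image_eq[of c, OF less_imp_neq[OF c, symmetric]]
    by (simp only: set_eq_iff Diff_iff mem_Collect_eq I B simp_thms)
qed

lemma interval_partition_scale:
  assumes c: "0 < c" and \<beta>: "interval_partition \<beta>"
  shows "interval_partition (scale c \<beta>)"
  unfolding interval_partition_def
proof (intro conjI ballI impI)
  fix U assume "U \<in> scale c \<beta>"
  then show "0 \<le> fst U" "fst U < snd U"
    using c interval_partitionD[OF \<beta>] by (auto simp: scale_eq_image)
next
  show "bdd_above (snd ` scale c \<beta>)"
    using c interval_partitionD(3)[OF \<beta>]
    by (intro bdd_aboveI[of _ "c * IP_len \<beta>"]) (auto simp: scale_eq_image)
next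
  fix U V assume "U \<in> scale c \<beta>" "V \<in> scale c \<beta>" "U \<noteq> V"
  then obtain U' V' where "U' \<in> \<beta>" "V' \<in> \<beta>" "U' \<noteq> V'" "U = scale_block c U'" "V = scale_block c V'"
    unfolding scale_eq_image by blast
  then show "block U \<inter> block V = {}"
    using interval_partition_disjoint[OF \<beta> \<open>U' \<in> \<beta>\<close> \<open>V' \<in> \<beta>\<close> \<open>U' \<noteq> V'\<close>] c
    by (auto simp: block_scale_block)
next
  show "{0..IP_len (scale c \<beta>)} - (\<Union>U\<in>scale c \<beta>. block U) \<in> null_sets lebesgue"
    unfolding uncovered_scale[OF c \<beta>] using \<beta>
    by (intro null_sets_lebesgue_mult_image) (simp add: interval_partition_def)
qed

section \<open>Diversity under dilation\<close>

lemma IA_imp_interval_partition: "\<beta> \<in> IA \<alpha> \<Longrightarrow> interval_partition \<beta>"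
  by (simp add: IA_def)

abbreviation div_ratio :: "real \<Rightarrow> ipart \<Rightarrow> real \<Rightarrow> real \<Rightarrow> real" where
  "div_ratio \<alpha> \<beta> t h \<equiv> h powr \<alpha> * real (div_count \<beta> t h)"

lemma div_count_scale:
  assumes "0 < c"
  shows "div_count (scale c \<beta>) t h = div_count \<beta> (t / c) (h / c)"
proof -
  have "h < snd (scale_block c U) - fst (scale_block c U) \<and> snd (scale_block c U) \<le> t
      \<longleftrightarrow> h / c < snd U - fst U \<and> snd U \<le> t / c" for U
    using assms by (simp add: pos_divide_less_eq pos_le_divide_eq mult.commute right_diff_distrib)
  then have "{U \<in> scale c \<beta>. h < snd U - fst U \<and> snd U \<le> t}
      = scale_block c ` {U \<in> \<beta>. h / c < snd U - fst U \<and> snd U \<le> t / c}"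
    unfolding scale_eq_image by blast
  then show ?thesis
    unfolding div_count_def using assms
    by (simp add: card_image inj_on_subset[OF inj_scale_block])
qed

lemma div_count_beyond_IP_len:
  assumes "interval_partition \<beta>" "IP_len \<beta> \<le> t"
  shows "div_count \<beta> t h = div_count \<beta> (IP_len \<beta>) h"
proof -
  have "snd U \<le> t \<longleftrightarrow> snd U \<le> IP_len \<beta>" if "U \<in> \<beta>" for U
    using interval_partitionD(3)[OF assms(1) that] assms(2) by linarith
  then show ?thesis
    unfolding div_count_def by (metis (lifting))
qed

lemma div_count_mono:
  assumes \<beta>: "interval_partition \<beta>" and "s \<le> t" "0 < h"
  shows "div_count \<beta> s h \<le> div_count \<beta> t h"
proof -
  have "{U\<in>\<beta>. h < snd U - fst U \<and> snd U \<le> t} \<subseteq> {U\<in>\<beta>. h < Leb U}"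
    by (auto simp: Leb_def)
  then have "finite {U\<in>\<beta>. h < snd U - fst U \<and> snd U \<le> t}"
    using finite_long_blocks[OF \<beta> \<open>0 < h\<close>] by (rule finite_subset)
  then show ?thesis
    unfolding div_count_def using \<open>s \<le> t\<close> by (intro card_mono) auto
qed

lemma tendsto_div_ratio_Lim:
  assumes "\<beta> \<in> IA \<alpha>" "0 \<le> t"
  shows "(div_ratio \<alpha> \<beta> t \<longlongrightarrow> Lim (at_right 0) (div_ratio \<alpha> \<beta> t)) (at_right 0)"
proof -
  have \<beta>: "interval_partition \<beta>" "has_diversity \<alpha> \<beta>"
    using assms(1) by (simp_all add: IA_def)
  \<comment> \<open>The hypothesis only covers \<open>t \<le> IP_len \<beta>\<close>; beyond that the count no longer changes.\<close>
  have "min t (IP_len \<beta>) \<in> {0..IP_len \<beta>}"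
    using assms(2) IP_len_nonneg[OF \<beta>(1)] by simp
  then obtain L where "(div_ratio \<alpha> \<beta> (min t (IP_len \<beta>)) \<longlongrightarrow> L) (at_right 0)"
    using \<beta>(2) unfolding has_diversity_def by blast
  moreover have "div_count \<beta> (min t (IP_len \<beta>)) h = div_count \<beta> t h" for h
  proof (cases "t \<le> IP_len \<beta>")
    case False
    then show ?thesis
      using div_count_beyond_IP_len[OF \<beta>(1), of t h] by simp
  qed simp
  ultimately have L: "(div_ratio \<alpha> \<beta> t \<longlongrightarrow> L) (at_right 0)"
    by simp
  then show ?thesis
    using tendsto_Lim[OF trivial_limit_at_right_real L] by simp
qed

lemma tendsto_div_ratio_scale:
  assumes "0 < c" "(div_ratio \<alpha> \<beta> t \<longlongrightarrow> l) (at_right 0)"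
  shows "(div_ratio \<alpha> (scale c \<beta>) (c * t) \<longlongrightarrow> c powr \<alpha> * l) (at_right 0)"
proof -
  have "(div_ratio \<alpha> \<beta> t \<longlongrightarrow> l) (filtermap ((*) (1 / c)) (at_right 0))"
    using assms by (simp add: filtermap_times_pos_at_right)
  then have "((\<lambda>h. c powr \<alpha> * div_ratio \<alpha> \<beta> t (1 / c * h)) \<longlongrightarrow> c powr \<alpha> * l) (at_right 0)"
    unfolding filterlim_filtermap by (rule tendsto_mult_left)
  moreover have "\<forall>\<^sub>F h in at_right 0.
      c powr \<alpha> * div_ratio \<alpha> \<beta> t (1 / c * h) = div_ratio \<alpha> (scale c \<beta>) (c * t) h"
    using eventually_at_right_less[of 0]
    by (rule eventually_mono) (use assms(1) in \<open>simp add: div_count_scale powr_divide\<close>)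
  ultimately show ?thesis
    by (rule Lim_transform_eventually)
qed

lemma IA_scale:
  assumes \<beta>: "\<beta> \<in> IA \<alpha>" and c: "0 < c"
  shows "scale c \<beta> \<in> IA \<alpha>"
proof -
  have "has_diversity \<alpha> (scale c \<beta>)"
    unfolding has_diversity_def
  proof
    fix t assume "t \<in> {0..IP_len (scale c \<beta>)}"
    then have "0 \<le> t / c"
      using c by simp
    from tendsto_div_ratio_scale[OF c tendsto_div_ratio_Lim[OF \<beta> this]]
    show "\<exists>L. (div_ratio \<alpha> (scale c \<beta>) t \<longlongrightarrow> L) (at_right 0)"
      using c by auto
  qed
  then show ?thesis
    using interval_partition_scale[OF c IA_imp_interval_partition[OF \<beta>]] by (simp add: IA_def)
qed

lemma diversity_scale:
  assumes "\<beta> \<in> IA \<alpha>" "0 \<le> t" "0 < c"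
  shows "diversity \<alpha> (scale c \<beta>) (c * t) = c powr \<alpha> * diversity \<alpha> \<beta> t"
  using tendsto_Lim[OF trivial_limit_at_right_real
      tendsto_div_ratio_scale[OF assms(3) tendsto_div_ratio_Lim[OF assms(1,2)]]]
  by (simp add: diversity_def)

lemma diversity_nonneg:
  assumes "\<beta> \<in> IA \<alpha>" "\<alpha> < 1" "0 \<le> t"
  shows "0 \<le> diversity \<alpha> \<beta> t"
proof -
  have "0 \<le> Lim (at_right 0) (div_ratio \<alpha> \<beta> t)"
    by (rule tendsto_lowerbound[OF tendsto_div_ratio_Lim[OF assms(1,3)]]) auto
  then show ?thesis
    using assms(2) by (simp add: diversity_def)
qed

lemma diversity_mono:
  assumes \<beta>: "\<beta> \<in> IA \<alpha>" and "\<alpha> < 1" "0 \<le> s" "s \<le> t"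
  shows "diversity \<alpha> \<beta> s \<le> diversity \<alpha> \<beta> t"
proof -
  have "\<forall>\<^sub>F h in at_right 0. div_ratio \<alpha> \<beta> s h \<le> div_ratio \<alpha> \<beta> t h"
    using eventually_at_right_less[of 0] by (rule eventually_mono)
      (use div_count_mono[OF IA_imp_interval_partition[OF \<beta>] \<open>s \<le> t\<close>] in simp)
  then have "Lim (at_right 0) (div_ratio \<alpha> \<beta> s) \<le> Lim (at_right 0) (div_ratio \<alpha> \<beta> t)"
    using \<open>0 \<le> s\<close> \<open>s \<le> t\<close>
    by (intro tendsto_le[OF _ tendsto_div_ratio_Lim[OF \<beta>] tendsto_div_ratio_Lim[OF \<beta>]]) auto
  then show ?thesis
    using \<open>\<alpha> < 1\<close> by (simp add: diversity_def)
qed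

lemma div_block_scale:
  assumes \<beta>: "\<beta> \<in> IA \<alpha>" and "U \<in> \<beta>" "0 < c"
  shows "div_block \<alpha> (scale c \<beta>) (scale_block c U) = c powr \<alpha> * div_block \<alpha> \<beta> U"
proof -
  have "0 \<le> (fst U + snd U) / 2"
    using interval_partitionD[OF IA_imp_interval_partition[OF \<beta>] \<open>U \<in> \<beta>\<close>] by simp
  moreover have "(c * fst U + c * snd U) / 2 = c * ((fst U + snd U) / 2)"
    by (simp add: algebra_simps)
  ultimately show ?thesis
    unfolding div_block_def scale_block_simps using diversity_scale[OF \<beta> _ \<open>0 < c\<close>] by metis
qed

lemma div_inf_scale:
  assumes \<beta>: "\<beta> \<in> IA \<alpha>" and c: "0 < c"
  shows "div_inf \<alpha> (scale c \<beta>) = c powr \<alpha> * div_inf \<alpha> \<beta>"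
  unfolding div_inf_def IP_len_scale[OF c IA_imp_interval_partition[OF \<beta>]]
  using diversity_scale[OF \<beta> IP_len_nonneg[OF IA_imp_interval_partition[OF \<beta>]] c] .

lemma div_block_bounds:
  assumes \<beta>: "\<beta> \<in> IA \<alpha>" and "\<alpha> < 1" "U \<in> \<beta>"
  shows "0 \<le> div_block \<alpha> \<beta> U" "div_block \<alpha> \<beta> U \<le> div_inf \<alpha> \<beta>"
proof -
  have "0 \<le> (fst U + snd U) / 2" "(fst U + snd U) / 2 \<le> IP_len \<beta>"
    using interval_partitionD[OF IA_imp_interval_partition[OF \<beta>] \<open>U \<in> \<beta>\<close>] by simp_all
  then show "0 \<le> div_block \<alpha> \<beta> U" "div_block \<alpha> \<beta> U \<le> div_inf \<alpha> \<beta>"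
    unfolding div_block_def div_inf_def using diversity_nonneg diversity_mono assms by blast+
qed

lemma div_inf_nonneg: "\<beta> \<in> IA \<alpha> \<Longrightarrow> \<alpha> < 1 \<Longrightarrow> 0 \<le> div_inf \<alpha> \<beta>"
  unfolding div_inf_def by (intro diversity_nonneg IP_len_nonneg IA_imp_interval_partition)

lemma correspondence_Nil: "correspondence \<beta> \<gamma> []"
  by (simp add: correspondence_def)

lemma dis_H_ge_IP_len_diff:
  assumes "interval_partition \<beta>" "interval_partition \<gamma>" and cs: "correspondence \<beta> \<gamma> cs"
  shows "\<bar>IP_len \<beta> - IP_len \<gamma>\<bar> \<le> dis_H \<beta> \<gamma> cs"
proof -
  define S where "S = sum_list (map (\<lambda>p. \<bar>Leb (fst p) - Leb (snd p)\<bar>) cs)"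
  define SU where "SU = sum_list (map Leb (map fst cs))"
  define SV where "SV = sum_list (map Leb (map snd cs))"
  have "SU \<le> IP_len \<beta>"
    unfolding SU_def using cs
    by (intro sum_list_Leb_le_IP_len[OF assms(1)]) (auto simp: correspondence_def)
  moreover have "SV \<le> IP_len \<gamma>"
    unfolding SV_def using cs
    by (intro sum_list_Leb_le_IP_len[OF assms(2)]) (auto simp: correspondence_def)
  moreover have "\<bar>SU - SV\<bar> \<le> S"
    using sum_list_abs[of "map (\<lambda>p. Leb (fst p) - Leb (snd p)) cs"]
    by (simp add: S_def SU_def SV_def o_def sum_list_subtractf)
  ultimately show ?thesis
    unfolding dis_H_def Let_def by (simp add: S_def SU_def SV_def o_def)
qed

lemma dis_H_nonneg:
  "interval_partition \<beta> \<Longrightarrow> interval_partition \<gamma> \<Longrightarrow> correspondence \<beta> \<gamma> cs \<Longrightarrow> 0 \<le> dis_H \<beta> \<gamma> cs"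
  using dis_H_ge_IP_len_diff by fastforce

text \<open>Terms (iii) and (iv) of the \<open>\<alpha>\<close>-distortion: under dilation they scale by
  \<open>c powr \<alpha>\<close>, the Hausdorff terms by \<open>c\<close>.\<close>

definition dis_div :: "real \<Rightarrow> ipart \<Rightarrow> ipart \<Rightarrow> ((real \<times> real) \<times> (real \<times> real)) list \<Rightarrow> real" where
  "dis_div \<alpha> \<beta> \<gamma> cs =
     max (Max (insert 0 (set (map (\<lambda>p. \<bar>div_block \<alpha> \<beta> (fst p) - div_block \<alpha> \<gamma> (snd p)\<bar>) cs))))
         \<bar>div_inf \<alpha> \<beta> - div_inf \<alpha> \<gamma>\<bar>"

lemma dis_alpha_eq_max: "dis_alpha \<alpha> \<beta> \<gamma> cs = max (dis_H \<beta> \<gamma> cs) (dis_div \<alpha> \<beta> \<gamma> cs)"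
  by (simp add: dis_alpha_def dis_div_def)

lemma dis_div_nonneg: "0 \<le> dis_div \<alpha> \<beta> \<gamma> cs"
  by (simp add: dis_div_def le_max_iff_disj)

lemma dis_alpha_nonneg: "0 \<le> dis_alpha \<alpha> \<beta> \<gamma> cs"
  by (simp add: dis_alpha_eq_max le_max_iff_disj dis_div_nonneg)

lemma bdd_below_dis_H:
  "interval_partition \<beta> \<Longrightarrow> interval_partition \<gamma>
    \<Longrightarrow> bdd_below (dis_H \<beta> \<gamma> ` {cs. correspondence \<beta> \<gamma> cs})"
  by (rule bdd_belowI2[of _ 0]) (simp add: dis_H_nonneg)

lemma bdd_below_dis_alpha: "bdd_below (dis_alpha \<alpha> \<beta> \<gamma> ` C)"
  by (rule bdd_belowI2[of _ 0]) (rule dis_alpha_nonneg)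

lemma dH'_le:
  "interval_partition \<beta> \<Longrightarrow> interval_partition \<gamma> \<Longrightarrow> correspondence \<beta> \<gamma> cs
    \<Longrightarrow> dH' \<beta> \<gamma> \<le> dis_H \<beta> \<gamma> cs"
  unfolding dH'_def by (rule cINF_lower[OF bdd_below_dis_H]) simp_all

lemma d_alpha_le: "correspondence \<beta> \<gamma> cs \<Longrightarrow> d_alpha \<alpha> \<beta> \<gamma> \<le> dis_alpha \<alpha> \<beta> \<gamma> cs"
  unfolding d_alpha_def by (rule cINF_lower[OF bdd_below_dis_alpha]) simp

section \<open>Dilating two partitions\<close>

definition scale_corr ::
    "real \<Rightarrow> ((real \<times> real) \<times> (real \<times> real)) list \<Rightarrow> ((real \<times> real) \<times> (real \<times> real)) list" where
  "scale_corr c cs = map (map_prod (scale_block c) (scale_block c)) cs"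

lemma correspondence_scale_corr:
  assumes "0 < c" "correspondence \<beta> \<gamma> cs"
  shows "correspondence (scale c \<beta>) (scale c \<gamma>) (scale_corr c cs)"
  using assms by (auto simp: correspondence_def scale_corr_def scale_eq_image sorted_wrt_map)

lemma scale_corr_inverse:
  assumes "c \<noteq> 0"
  shows "scale_corr (1 / c) (scale_corr c cs) = cs"
proof -
  have "scale_block (1 / c) \<circ> scale_block c = id"
    using assms by (simp add: fun_eq_iff)
  then show ?thesis
    by (simp add: scale_corr_def map_prod.comp prod.map_id0)
qed

lemma correspondences_scale:
  assumes "0 < c"
  shows "{cs. correspondence (scale c \<beta>) (scale c \<gamma>) cs} = scale_corr c ` {cs. correspondence \<beta> \<gamma> cs}"
proof (intro antisym subsetI)
  fix cs assume "cs \<in> {cs. correspondence (scale c \<beta>) (scale c \<gamma>) cs}"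
  then have "correspondence \<beta> \<gamma> (scale_corr (1 / c) cs)"
    using correspondence_scale_corr[of "1 / c" "scale c \<beta>" "scale c \<gamma>" cs] assms
    by (simp add: scale_inverse)
  moreover have "cs = scale_corr c (scale_corr (1 / c) cs)"
    using scale_corr_inverse[of "1 / c" cs] assms by simp
  ultimately show "cs \<in> scale_corr c ` {cs. correspondence \<beta> \<gamma> cs}"
    by blast
qed (use correspondence_scale_corr[OF assms] in blast)

lemma dis_H_scale_corr:
  assumes c: "0 < c" and \<beta>: "interval_partition \<beta>" and \<gamma>: "interval_partition \<gamma>"
  shows "dis_H (scale c \<beta>) (scale c \<gamma>) (scale_corr c cs) = c * dis_H \<beta> \<gamma> cs"
proof -
  define S where "S = sum_list (map (\<lambda>p. \<bar>Leb (fst p) - Leb (snd p)\<bar>) cs)"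
  define SU where "SU = sum_list (map (\<lambda>p. Leb (fst p)) cs)"
  define SV where "SV = sum_list (map (\<lambda>p. Leb (snd p)) cs)"
  have "\<bar>c * a - c * b\<bar> = c * \<bar>a - b\<bar>" for a b
    using c by (simp add: right_diff_distrib[symmetric] abs_mult)
  then have "dis_H (scale c \<beta>) (scale c \<gamma>) (scale_corr c cs)
      = max (c * S + c * IP_len \<beta> - c * SU) (c * S + c * IP_len \<gamma> - c * SV)"
    unfolding dis_H_def Let_def scale_corr_def IP_len_scale[OF c \<beta>] IP_len_scale[OF c \<gamma>]
    by (simp add: S_def SU_def SV_def o_def sum_list_const_mult)
  also have "\<dots> = c * max (S + IP_len \<beta> - SU) (S + IP_len \<gamma> - SV)"
    using c by (simp add: max_mult_distrib_left right_diff_distrib distrib_left)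
  finally show ?thesis
    unfolding dis_H_def Let_def S_def SU_def SV_def .
qed

lemma dis_div_scale_corr:
  assumes \<beta>: "\<beta> \<in> IA \<alpha>" and \<gamma>: "\<gamma> \<in> IA \<alpha>" and c: "0 < c" and cs: "correspondence \<beta> \<gamma> cs"
  shows "dis_div \<alpha> (scale c \<beta>) (scale c \<gamma>) (scale_corr c cs) = c powr \<alpha> * dis_div \<alpha> \<beta> \<gamma> cs"
proof -
  have k: "0 < c powr \<alpha>"
    using c by simp
  have abs_scale: "\<bar>c powr \<alpha> * a - c powr \<alpha> * b\<bar> = c powr \<alpha> * \<bar>a - b\<bar>" for a b
    using k by (simp add: right_diff_distrib[symmetric] abs_mult)
  have map_eq: "map (\<lambda>p. \<bar>div_block \<alpha> (scale c \<beta>) (fst p) - div_block \<alpha> (scale c \<gamma>) (snd p)\<bar>) (scale_corr c cs)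
      = map (\<lambda>p. c powr \<alpha> * \<bar>div_block \<alpha> \<beta> (fst p) - div_block \<alpha> \<gamma> (snd p)\<bar>) cs"
    unfolding scale_corr_def map_map
  proof (rule map_cong[OF refl])
    fix p assume "p \<in> set cs"
    then have "fst p \<in> \<beta>" "snd p \<in> \<gamma>"
      using cs by (auto simp: correspondence_def)
    then show "((\<lambda>p. \<bar>div_block \<alpha> (scale c \<beta>) (fst p) - div_block \<alpha> (scale c \<gamma>) (snd p)\<bar>)
        \<circ> map_prod (scale_block c) (scale_block c)) p
        = c powr \<alpha> * \<bar>div_block \<alpha> \<beta> (fst p) - div_block \<alpha> \<gamma> (snd p)\<bar>"
      using div_block_scale[OF \<beta> _ c] div_block_scale[OF \<gamma> _ c] by (simp add: abs_scale)
  qed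
  show ?thesis
    unfolding dis_div_def map_eq div_inf_scale[OF \<beta> c] div_inf_scale[OF \<gamma> c] abs_scale
      Max_insert_0_mult[OF less_imp_le[OF k]]
    using k by (simp add: max_mult_distrib_left)
qed

lemma dis_alpha_scale_corr_bounds:
  assumes \<beta>: "\<beta> \<in> IA \<alpha>" and \<gamma>: "\<gamma> \<in> IA \<alpha>" and c: "0 < c" and cs: "correspondence \<beta> \<gamma> cs"
  shows "min c (c powr \<alpha>) * dis_alpha \<alpha> \<beta> \<gamma> cs
           \<le> dis_alpha \<alpha> (scale c \<beta>) (scale c \<gamma>) (scale_corr c cs)"
    and "dis_alpha \<alpha> (scale c \<beta>) (scale c \<gamma>) (scale_corr c cs)
           \<le> max c (c powr \<alpha>) * dis_alpha \<alpha> \<beta> \<gamma> cs"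
proof -
  have ip: "interval_partition \<beta>" "interval_partition \<gamma>"
    using \<beta> \<gamma> by (simp_all add: IA_imp_interval_partition)
  have "dis_alpha \<alpha> (scale c \<beta>) (scale c \<gamma>) (scale_corr c cs)
      = max (c * dis_H \<beta> \<gamma> cs) (c powr \<alpha> * dis_div \<alpha> \<beta> \<gamma> cs)"
    unfolding dis_alpha_eq_max dis_H_scale_corr[OF c ip] dis_div_scale_corr[OF \<beta> \<gamma> c cs] ..
  moreover have "0 \<le> dis_H \<beta> \<gamma> cs" "0 \<le> dis_div \<alpha> \<beta> \<gamma> cs" "0 \<le> c" "0 \<le> c powr \<alpha>"
    using dis_H_nonneg[OF ip cs] dis_div_nonneg c by simp_all
  ultimately show "min c (c powr \<alpha>) * dis_alpha \<alpha> \<beta> \<gamma> cs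
           \<le> dis_alpha \<alpha> (scale c \<beta>) (scale c \<gamma>) (scale_corr c cs)"
    and "dis_alpha \<alpha> (scale c \<beta>) (scale c \<gamma>) (scale_corr c cs)
           \<le> max c (c powr \<alpha>) * dis_alpha \<alpha> \<beta> \<gamma> cs"
    unfolding dis_alpha_eq_max using max_scaled_bounds by presburger+
qed

lemma dH'_scale:
  assumes c: "0 < c" and \<beta>: "interval_partition \<beta>" and \<gamma>: "interval_partition \<gamma>"
  shows "dH' (scale c \<beta>) (scale c \<gamma>) = c * dH' \<beta> \<gamma>"
  unfolding dH'_def correspondences_scale[OF c] image_image dis_H_scale_corr[OF c \<beta> \<gamma>]
  using c correspondence_Nil bdd_below_dis_H[OF \<beta> \<gamma>]
  by (intro mult_left_INF_real[symmetric]) auto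

lemma d_alpha_scale_bounds:
  assumes \<beta>: "\<beta> \<in> IA \<alpha>" and \<gamma>: "\<gamma> \<in> IA \<alpha>" and c: "0 < c"
  shows "min c (c powr \<alpha>) * d_alpha \<alpha> \<beta> \<gamma> \<le> d_alpha \<alpha> (scale c \<beta>) (scale c \<gamma>)"
    and "d_alpha \<alpha> (scale c \<beta>) (scale c \<gamma>) \<le> max c (c powr \<alpha>) * d_alpha \<alpha> \<beta> \<gamma>"
proof -
  define C where "C = {cs. correspondence \<beta> \<gamma> cs}"
  have C: "C \<noteq> {}"
    unfolding C_def using correspondence_Nil by blast
  have scaled: "d_alpha \<alpha> (scale c \<beta>) (scale c \<gamma>)
      = (INF cs\<in>C. dis_alpha \<alpha> (scale c \<beta>) (scale c \<gamma>) (scale_corr c cs))"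
    unfolding d_alpha_def correspondences_scale[OF c] image_image C_def ..
  have "min c (c powr \<alpha>) * d_alpha \<alpha> \<beta> \<gamma> = (INF cs\<in>C. min c (c powr \<alpha>) * dis_alpha \<alpha> \<beta> \<gamma> cs)"
    unfolding d_alpha_def C_def[symmetric] using c C
    by (intro mult_left_INF_real bdd_below_dis_alpha) simp_all
  also have "\<dots> \<le> d_alpha \<alpha> (scale c \<beta>) (scale c \<gamma>)"
  proof -
    have "0 \<le> min c (c powr \<alpha>) * dis_alpha \<alpha> \<beta> \<gamma> cs" for cs
      using c dis_alpha_nonneg by simp
    then show ?thesis
      unfolding scaled using C dis_alpha_scale_corr_bounds(1)[OF \<beta> \<gamma> c]
      by (intro cINF_mono bdd_belowI2[of _ 0]) (auto simp: C_def)
  qed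
  finally show "min c (c powr \<alpha>) * d_alpha \<alpha> \<beta> \<gamma> \<le> d_alpha \<alpha> (scale c \<beta>) (scale c \<gamma>)" .
  have "d_alpha \<alpha> (scale c \<beta>) (scale c \<gamma>) \<le> (INF cs\<in>C. max c (c powr \<alpha>) * dis_alpha \<alpha> \<beta> \<gamma> cs)"
    unfolding scaled using C dis_alpha_scale_corr_bounds(2)[OF \<beta> \<gamma> c]
    by (intro cINF_mono bdd_belowI2[of _ 0] dis_alpha_nonneg) (auto simp: C_def)
  also have "\<dots> = max c (c powr \<alpha>) * d_alpha \<alpha> \<beta> \<gamma>"
    unfolding d_alpha_def C_def[symmetric] using c C
    by (intro mult_left_INF_real[symmetric] bdd_below_dis_alpha) simp_all
  finally show "d_alpha \<alpha> (scale c \<beta>) (scale c \<gamma>) \<le> max c (c powr \<alpha>) * d_alpha \<alpha> \<beta> \<gamma>" .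
qed

section \<open>A partition and its dilation\<close>

definition diag_corr :: "real \<Rightarrow> (real \<times> real) list \<Rightarrow> ((real \<times> real) \<times> (real \<times> real)) list" where
  "diag_corr c xs = map (\<lambda>U. (U, scale_block c U)) xs"

lemma correspondence_diag_corr:
  assumes "0 < c" "set xs \<subseteq> \<beta>" "sorted_wrt (\<lambda>U V. fst U < fst V) xs"
  shows "correspondence \<beta> (scale c \<beta>) (diag_corr c xs)"
  using assms by (auto simp: correspondence_def diag_corr_def scale_eq_image sorted_wrt_map o_def)

lemma dis_H_diag_corr_le:
  assumes c: "0 < c" and \<beta>: "interval_partition \<beta>"
    and xs: "set xs \<subseteq> \<beta>" "sorted_wrt (\<lambda>U V. fst U < fst V) xs"
  shows "dis_H \<beta> (scale c \<beta>) (diag_corr c xs)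
           \<le> \<bar>c - 1\<bar> * IP_len \<beta> + max 1 c * (IP_len \<beta> - sum_list (map Leb xs))"
proof -
  define S where "S = sum_list (map Leb xs)"
  define L where "L = IP_len \<beta>"
  have SL: "S \<le> L"
    unfolding S_def L_def by (rule sum_list_Leb_le_IP_len[OF \<beta> xs])
  have "\<bar>Leb U - c * Leb U\<bar> = \<bar>c - 1\<bar> * Leb U" if "U \<in> set xs" for U
    using Leb_pos[OF \<beta>] xs(1) that by (meson abs_diff_mult_self less_imp_le subsetD)
  then have "sum_list (map (\<lambda>p. \<bar>Leb (fst p) - Leb (snd p)\<bar>) (diag_corr c xs)) = \<bar>c - 1\<bar> * S"
    unfolding diag_corr_def S_def by (simp add: o_def sum_list_const_mult cong: map_cong)
  then have "dis_H \<beta> (scale c \<beta>) (diag_corr c xs)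
      = max (\<bar>c - 1\<bar> * S + L - S) (\<bar>c - 1\<bar> * S + c * L - c * S)"
    unfolding dis_H_def Let_def IP_len_scale[OF c \<beta>]
    by (simp add: diag_corr_def S_def L_def o_def sum_list_const_mult)
  also have "\<dots> = \<bar>c - 1\<bar> * S + max (L - S) (c * (L - S))"
    by (simp add: max_def algebra_simps)
  also have "\<dots> = \<bar>c - 1\<bar> * S + max 1 c * (L - S)"
    using SL by (simp add: max_mult_distrib_right)
  also have "\<dots> \<le> \<bar>c - 1\<bar> * L + max 1 c * (L - S)"
    using SL by (simp add: mult_left_mono)
  finally show ?thesis
    unfolding S_def L_def .
qed

lemma exists_diag_corr_dis_H_le:
  assumes c: "0 < c" and \<beta>: "interval_partition \<beta>" and "0 < e"
  obtains xs where "set xs \<subseteq> \<beta>" "sorted_wrt (\<lambda>U V. fst U < fst V) xs"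
    "dis_H \<beta> (scale c \<beta>) (diag_corr c xs) \<le> \<bar>c - 1\<bar> * IP_len \<beta> + e"
proof -
  have m: "0 < max 1 c"
    by simp
  obtain F where F: "finite F" "F \<subseteq> \<beta>" "IP_len \<beta> - e / max 1 c < sum Leb F"
    using exists_finite_blocks_sum_Leb_gt[OF \<beta>] \<open>0 < e\<close> m by (metis divide_pos_pos)
  obtain xs where xs: "set xs = F" "sorted_wrt (\<lambda>U V. fst U < fst V) xs"
    using exists_sorted_blocks[OF \<beta> F(1,2)] .
  have "sum_list (map Leb xs) = sum Leb F"
    using sum_list_distinct_conv_sum_set[OF sorted_fst_imp_distinct[OF xs(2)]] xs(1) by simp
  then have "max 1 c * (IP_len \<beta> - sum_list (map Leb xs)) \<le> e"
    using F(3) m by (simp add: field_simps)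
  then have "dis_H \<beta> (scale c \<beta>) (diag_corr c xs) \<le> \<bar>c - 1\<bar> * IP_len \<beta> + e"
    using dis_H_diag_corr_le[OF c \<beta>, of xs] xs F(2) by simp
  then show ?thesis
    using that xs F(2) by blast
qed

lemma dH'_self_scale:
  assumes c: "0 < c" and \<beta>: "interval_partition \<beta>"
  shows "dH' \<beta> (scale c \<beta>) = \<bar>c - 1\<bar> * IP_len \<beta>"
proof (rule antisym)
  have "\<bar>c - 1\<bar> * IP_len \<beta> = \<bar>IP_len \<beta> - IP_len (scale c \<beta>)\<bar>"
    unfolding IP_len_scale[OF c \<beta>] using IP_len_nonneg[OF \<beta>] by (rule abs_diff_mult_self[symmetric])
  then show "\<bar>c - 1\<bar> * IP_len \<beta> \<le> dH' \<beta> (scale c \<beta>)"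
    unfolding dH'_def using correspondence_Nil
    dis_H_ge_IP_len_diff[OF \<beta> interval_partition_scale[OF c \<beta>]]
    by (intro cINF_greatest) auto
  show "dH' \<beta> (scale c \<beta>) \<le> \<bar>c - 1\<bar> * IP_len \<beta>"
  proof (rule field_le_epsilon)
    fix e :: real assume "0 < e"
    then obtain xs where xs: "set xs \<subseteq> \<beta>" "sorted_wrt (\<lambda>U V. fst U < fst V) xs"
      "dis_H \<beta> (scale c \<beta>) (diag_corr c xs) \<le> \<bar>c - 1\<bar> * IP_len \<beta> + e"
      by (rule exists_diag_corr_dis_H_le[OF c \<beta>])
    have "dH' \<beta> (scale c \<beta>) \<le> dis_H \<beta> (scale c \<beta>) (diag_corr c xs)"
      by (rule dH'_le[OF \<beta> interval_partition_scale[OF c \<beta>] correspondence_diag_corr[OF c xs(1,2)]])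
    then show "dH' \<beta> (scale c \<beta>) \<le> \<bar>c - 1\<bar> * IP_len \<beta> + e"
      using xs(3) by linarith
  qed
qed

lemma dis_div_diag_corr_le:
  assumes \<beta>: "\<beta> \<in> IA \<alpha>" and "\<alpha> < 1" "0 < c" "set xs \<subseteq> \<beta>"
  shows "dis_div \<alpha> \<beta> (scale c \<beta>) (diag_corr c xs) \<le> \<bar>c powr \<alpha> - 1\<bar> * div_inf \<alpha> \<beta>"
proof -
  have "\<bar>div_block \<alpha> \<beta> U - div_block \<alpha> (scale c \<beta>) (scale_block c U)\<bar> \<le> \<bar>c powr \<alpha> - 1\<bar> * div_inf \<alpha> \<beta>"
    if "U \<in> \<beta>" for U
    using div_block_bounds[OF \<beta> \<open>\<alpha> < 1\<close> that] abs_diff_mult_self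
    by (simp add: div_block_scale[OF \<beta> that \<open>0 < c\<close>] mult_left_mono)
  moreover have "0 \<le> \<bar>c powr \<alpha> - 1\<bar> * div_inf \<alpha> \<beta>"
    using div_inf_nonneg[OF \<beta> \<open>\<alpha> < 1\<close>] by simp
  ultimately show ?thesis
    unfolding dis_div_def diag_corr_def div_inf_scale[OF \<beta> \<open>0 < c\<close>]
    using assms(4) abs_diff_mult_self[OF div_inf_nonneg[OF \<beta> \<open>\<alpha> < 1\<close>]] by (auto simp: Max_le_iff)
qed

lemma d_alpha_self_scale_le:
  assumes \<beta>: "\<beta> \<in> IA \<alpha>" and "\<alpha> < 1" and c: "0 < c"
  shows "d_alpha \<alpha> \<beta> (scale c \<beta>) \<le> max (\<bar>c powr \<alpha> - 1\<bar> * div_inf \<alpha> \<beta>) (\<bar>c - 1\<bar> * IP_len \<beta>)"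
proof (rule field_le_epsilon)
  fix e :: real assume "0 < e"
  have ip: "interval_partition \<beta>"
    using \<beta> by (rule IA_imp_interval_partition)
  obtain xs where xs: "set xs \<subseteq> \<beta>" "sorted_wrt (\<lambda>U V. fst U < fst V) xs"
    "dis_H \<beta> (scale c \<beta>) (diag_corr c xs) \<le> \<bar>c - 1\<bar> * IP_len \<beta> + e"
    by (rule exists_diag_corr_dis_H_le[OF c ip \<open>0 < e\<close>])
  have "d_alpha \<alpha> \<beta> (scale c \<beta>) \<le> dis_alpha \<alpha> \<beta> (scale c \<beta>) (diag_corr c xs)"
    by (rule d_alpha_le[OF correspondence_diag_corr[OF c xs(1,2)]])
  also have "\<dots> \<le> max (\<bar>c - 1\<bar> * IP_len \<beta> + e) (\<bar>c powr \<alpha> - 1\<bar> * div_inf \<alpha> \<beta>)"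
    unfolding dis_alpha_eq_max using xs(3) dis_div_diag_corr_le[OF \<beta> \<open>\<alpha> < 1\<close> c xs(1)]
    by (rule max.mono)
  also have "\<dots> \<le> max (\<bar>c powr \<alpha> - 1\<bar> * div_inf \<alpha> \<beta>) (\<bar>c - 1\<bar> * IP_len \<beta>) + e"
    using \<open>0 < e\<close> by (simp add: le_max_iff_disj)
  finally show "d_alpha \<alpha> \<beta> (scale c \<beta>) \<le> max (\<bar>c powr \<alpha> - 1\<bar> * div_inf \<alpha> \<beta>) (\<bar>c - 1\<bar> * IP_len \<beta>) + e" .
qed

theorem lemma3p4:
  fixes \<alpha> c :: real and \<beta> \<gamma> :: ipart
  assumes "0 < \<alpha>" and "\<alpha> < 1" and "0 < c"
  shows "bij_betw (scale c) IH IH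
    \<and> bij_betw (scale c) (IA \<alpha>) (IA \<alpha>)
    \<and> (\<beta> \<in> IA \<alpha> \<longrightarrow> has_diversity \<alpha> (scale c \<beta>) \<and>
           (\<forall>t>0. diversity \<alpha> (scale c \<beta>) (c * t) = c powr \<alpha> * diversity \<alpha> \<beta> t))
    \<and> (\<beta> \<in> IA \<alpha> \<longrightarrow> \<gamma> \<in> IA \<alpha> \<longrightarrow>
         (
           dH' \<beta> (scale c \<beta>) = \<bar>c - 1\<bar> * IP_len \<beta>
         \<and> dH' (scale c \<beta>) (scale c \<gamma>) = c * dH' \<beta> \<gamma>
         \<and> d_alpha \<alpha> \<beta> (scale c \<beta>) \<le> max (\<bar>c powr \<alpha> - 1\<bar> * div_inf \<alpha> \<beta>) (\<bar>c - 1\<bar> * IP_len \<beta>)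
         \<and> min c (c powr \<alpha>) * d_alpha \<alpha> \<beta> \<gamma> \<le> d_alpha \<alpha> (scale c \<beta>) (scale c \<gamma>)
         \<and> d_alpha \<alpha> (scale c \<beta>) (scale c \<gamma>) \<le> max c (c powr \<alpha>) * d_alpha \<alpha> \<beta> \<gamma>))"
proof (intro conjI impI allI)
  show "bij_betw (scale c) IH IH"
    using \<open>0 < c\<close> by (rule bij_betw_scale) (simp add: IH_def interval_partition_scale)
  show "bij_betw (scale c) (IA \<alpha>) (IA \<alpha>)"
    using \<open>0 < c\<close> by (rule bij_betw_scale) (rule IA_scale)
  fix t assume "\<beta> \<in> IA \<alpha>"
  then show "has_diversity \<alpha> (scale c \<beta>)"
    using IA_scale[OF _ \<open>0 < c\<close>] by (simp add: IA_def)
  show "0 < t \<Longrightarrow> diversity \<alpha> (scale c \<beta>) (c * t) = c powr \<alpha> * diversity \<alpha> \<beta> t"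
    using diversity_scale[OF \<open>\<beta> \<in> IA \<alpha>\<close> _ \<open>0 < c\<close>] by simp
  assume "\<gamma> \<in> IA \<alpha>"
  have ip: "interval_partition \<beta>" "interval_partition \<gamma>"
    using \<open>\<beta> \<in> IA \<alpha>\<close> \<open>\<gamma> \<in> IA \<alpha>\<close> by (simp_all add: IA_imp_interval_partition)
  show "dH' \<beta> (scale c \<beta>) = \<bar>c - 1\<bar> * IP_len \<beta>"
    by (rule dH'_self_scale[OF \<open>0 < c\<close> ip(1)])
  show "dH' (scale c \<beta>) (scale c \<gamma>) = c * dH' \<beta> \<gamma>"
    by (rule dH'_scale[OF \<open>0 < c\<close> ip])
  show "d_alpha \<alpha> \<beta> (scale c \<beta>) \<le> max (\<bar>c powr \<alpha> - 1\<bar> * div_inf \<alpha> \<beta>) (\<bar>c - 1\<bar> * IP_len \<beta>)"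
    by (rule d_alpha_self_scale_le[OF \<open>\<beta> \<in> IA \<alpha>\<close> \<open>\<alpha> < 1\<close> \<open>0 < c\<close>])
  show "min c (c powr \<alpha>) * d_alpha \<alpha> \<beta> \<gamma> \<le> d_alpha \<alpha> (scale c \<beta>) (scale c \<gamma>)"
    and "d_alpha \<alpha> (scale c \<beta>) (scale c \<gamma>) \<le> max c (c powr \<alpha>) * d_alpha \<alpha> \<beta> \<gamma>"
    using d_alpha_scale_bounds[OF \<open>\<beta> \<in> IA \<alpha>\<close> \<open>\<gamma> \<in> IA \<alpha>\<close> \<open>0 < c\<close>] by simp_all
qed

end
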